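(* Let $n\ge 3$, let $\varepsilon$ be an $n\times n$ signature matrix and let $(a_{\mathbf{i}})_{\mathbf{i}\in\mathbb{Z}^n}$ be an $\varepsilon$-$\mathrm{SL}_2$-tiling of $\mathbb{Z}^n$. Then every entry $a_{\mathbf{i}}$ is an odd-indexed Fibonacci number $F_{2m-1}$ ($m\ge1$), and for all $\mathbf{i}\in\mathbb{Z}^n$ and all $k\in\{1,\dots,n\}$ one has $a_{\mathbf{i}+\mathbf{e}_k}^2-a_{\mathbf{i}}a_{\mathbf{i}+2\mathbf{e}_k}=-1=\varepsilon_{kk}$.
   Context: Write $\mathbf{i}=(i_1,\dots,i_n)\in\mathbb{Z}^n$ and $\mathbf{e}_k$ for the $k$-th standard unit vector. Fibonacci numbers are indexed $F_1=1,F_2=1,F_3=2,F_4=3,F_5=5,\dots$ with $F_{m+2}=F_{m+1}+F_m$. A signature matrix is a symmetric $n\times n$ matrix $\varepsilon=(\varepsilon_{k\ell})$ with $\varepsilon_{k\ell}\in\{1,-1\}$ for $k\ne\ell$ and $\varepsilon_{kk}=-1$. Given a signature matrix $\varepsilon$, an array $(a_{\mathbf{i}})_{\mathbf{i}\in\mathbb{Z}^n}$ with all $a_{\mathbf{i}}\in\mathbb{Z}_{>0}$ is an $\varepsilon$-$\mathrm{SL}_2$-tiling of $\mathbb{Z}^n$ if for all $\mathbf{i}\in\mathbb{Z}^n$ and all $k\ne\ell$: $a_{\mathbf{i}+\mathbf{e}_\ell}a_{\mathbf{i}+\mathbf{e}_k}-a_{\mathbf{i}}a_{\mathbf{i}+\mathbf{e}_k+\mathbf{e}_\ell}=\varepsilon_{k\ell}$.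 *)

theory Defs
  imports "HOL-Analysis.Analysis" "HOL-Number_Theory.Fib"
begin

text \<open>Points of Z^n are vectors int ^ 'n, with n = CARD('n); the standard
unit vector e_k is axis k 1. Fibonacci: fib 1 = fib 2 = 1 (library).\<close>


definition unit_vec :: "'n::finite \<Rightarrow> int ^ 'n" where
  "unit_vec k = axis k 1"

definition signature_matrix :: "('n::finite \<Rightarrow> 'n \<Rightarrow> int) \<Rightarrow> bool" where
  "signature_matrix eps \<longleftrightarrow>
     (\<forall>k l. eps k l = eps l k) \<and>
     (\<forall>k l. k \<noteq> l \<longrightarrow> eps k l \<in> {1, -1}) \<and>
     (\<forall>k. eps k k = -1)"

definition SL2_tiling :: "('n::finite \<Rightarrow> 'n \<Rightarrow> int) \<Rightarrow> (int ^ 'n \<Rightarrow> int) \<Rightarrow> bool" where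
  "SL2_tiling eps a \<longleftrightarrow>
     (\<forall>i. a i > 0) \<and>
     (\<forall>i k l. k \<noteq> l \<longrightarrow>
        a (i + unit_vec l) * a (i + unit_vec k) - a i * a (i + unit_vec k + unit_vec l) = eps k l)"

end

theory Submission
  imports Defs
begin

text \<open>For three distinct directions k, l, m the tiling relations on the faces of the unit
cube at i combine into one polynomial identity in a at i and its three neighbours. Together with
positivity and a minimum of the tiling this forces, for every triangle of directions, either
a(i+e_k) = a(i+e_l) everywhere (when eps_kl = -1) or a(i+e_k) a(i+e_l) = a_i^2 + 1 everywhere
(when eps_kl = 1); either way every coordinate line is a positive frieze
g_t g_(t+2) = g_(t+1)^2 + 1. Along such a frieze g_t^2 + g_(t+1)^2 + 1 = 3 g_t g_(t+1), as
one checks at a minimum and propagates by Vieta's relation g_(t+2) = 3 g_(t+1) - g_t, and Vieta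
jumping shows that positive solutions of x^2 + y^2 + 1 = 3xy are consecutive odd-indexed
Fibonacci numbers.\<close>

lemma ex_min_nonneg_int:
  fixes f :: "'a \<Rightarrow> int"
  assumes "\<And>x. 0 \<le> f x"
  shows "\<exists>x0. \<forall>x. f x0 \<le> f x"
proof -
  obtain x0 where "\<forall>y. nat (f x0) \<le> nat (f y)"
    using ex_has_least_nat[of "\<lambda>_. True" undefined "\<lambda>x. nat (f x)"] by auto
  then show ?thesis using assms by (metis nat_le_eq_zle)
qed

lemma exists_third_element:
  assumes "CARD('n::finite) \<ge> 3"
  shows "\<exists>m::'n. m \<noteq> k \<and> m \<noteq> l"
proof (rule ccontr)
  assume "\<not> ?thesis"
  then have "(UNIV :: 'n set) = {k, l}" by auto
  then have "CARD('n) = card {k, l}" by simp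
  also have "\<dots> \<le> 2" by (cases "k = l") auto
  finally show False using assms by simp
qed

lemma fib_odd_recurrence: "int (fib (2*m + 5)) = 3 * int (fib (2*m + 3)) - int (fib (2*m + 1))"
  by (simp add: numeral_eq_Suc)

lemma markov_vieta_step:
  fixes x y z :: int
  assumes "0 < x" and "x^2 + y^2 + 1 = 3*x*y" and "x * z = y^2 + 1"
  shows "y^2 + z^2 + 1 = 3*y*z"
proof -
  have "x * z = x * (3*y - x)" using assms(2,3) by (simp add: algebra_simps power2_eq_square)
  then have "z = 3*y - x" using assms(1) by simp
  then show ?thesis using assms(2) by algebra
qed

lemma markov_ordered_solution_fib:
  fixes x y :: int
  assumes "0 < x" and "x < y" and "x^2 + y^2 + 1 = 3*x*y"
  shows "\<exists>m. x = int (fib (2*m + 1)) \<and> y = int (fib (2*m + 3))"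
  using assms
proof (induction "nat x" arbitrary: x y rule: less_induct)
  case less
  define z where "z = 3*x - y"
  have zy: "y * z = x^2 + 1" using less.prems(3) by (simp add: z_def algebra_simps power2_eq_square)
  have "0 < y * z" unfolding zy by (simp add: add_nonneg_pos)
  then have "0 < z" using less.prems(1,2) by (simp add: zero_less_mult_iff)
  have "z \<le> x"
  proof (rule ccontr)
    assume "\<not> z \<le> x"
    then have "(x + 1) * (x + 1) \<le> y * z" using less.prems(2) \<open>0 < x\<close> by (intro mult_mono) auto
    then show False using zy less.prems(1) by (simp add: algebra_simps power2_eq_square)
  qed
  then consider "z = x" | "z < x" by linarith
  then show ?case
  proof cases
    case 1
    then have "x * (y - x) = 1" using zy by (simp add: algebra_simps power2_eq_square)
    then have "x = 1 \<and> y = 2" using less.prems(1) by (simp add: pos_zmult_eq_1_iff)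
    then show ?thesis by (intro exI[of _ 0]) (simp add: numeral_eq_Suc)
  next
    case 2
    have "y^2 + x^2 + 1 = 3*y*x" using less.prems(3) by (simp add: algebra_simps)
    from markov_vieta_step[OF _ this zy] have "z^2 + x^2 + 1 = 3*z*x"
      using less.prems(1,2) by (simp add: algebra_simps)
    then obtain m where m: "z = int (fib (2*m + 1))" "x = int (fib (2*m + 3))"
      using less.hyps[of z x] \<open>0 < z\<close> 2 by auto
    have "y = int (fib (2*m + 5))" using fib_odd_recurrence[of m] m z_def by linarith
    moreover have "2*(m + 1) + 1 = 2*m + 3" "2*(m + 1) + 3 = 2*m + 5" by simp_all
    ultimately have "x = int (fib (2*(m + 1) + 1)) \<and> y = int (fib (2*(m + 1) + 3))"
      using m(2) by (simp only:)
    then show ?thesis by blast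
  qed
qed

lemma markov_solution_odd_fib:
  fixes x y :: int
  assumes "0 < x" and "0 < y" and "x^2 + y^2 + 1 = 3*x*y"
  shows "\<exists>m\<ge>1. x = int (fib (2*m - 1))"
proof -
  consider "x = y" | "x < y" | "y < x" by linarith
  then show ?thesis
  proof cases
    case 1
    then have "x * x = 1" using assms(3) by (simp add: algebra_simps power2_eq_square)
    then have "x = 1" using assms(1) by (simp add: pos_zmult_eq_1_iff)
    then show ?thesis by (intro exI[of _ 1]) simp
  next
    case 2
    then obtain m where "x = int (fib (2*m + 1))"
      using markov_ordered_solution_fib assms by blast
    then show ?thesis by (intro exI[of _ "m + 1"]) simp
  next
    case 3
    have "y^2 + x^2 + 1 = 3*y*x" using assms(3) by (simp add: algebra_simps)
    then obtain m where "x = int (fib (2*m + 3))"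
      using markov_ordered_solution_fib 3 assms(2) by blast
    moreover have "2 * (m + 2) - 1 = 2*m + 3" by simp
    ultimately have "x = int (fib (2 * (m + 2) - 1))" by (simp only:)
    moreover have "1 \<le> m + 2" by simp
    ultimately show ?thesis by blast
  qed
qed

lemma positive_frieze_markov:
  fixes g :: "int \<Rightarrow> int"
  assumes pos: "\<And>t. 0 < g t" and frieze: "\<And>t. g t * g (t + 2) = g (t + 1)^2 + 1"
  shows "g t^2 + g (t + 1)^2 + 1 = 3 * g t * g (t + 1)"
proof -
  obtain t0 where min: "\<forall>t. g t0 \<le> g t"
    using ex_min_nonneg_int[of g] pos by (meson less_imp_le)
  define p x y where "p = g t0" and "x = g (t0 - 1)" and "y = g (t0 + 1)"
  have xy: "x * y = p^2 + 1" using frieze[of "t0 - 1"] by (simp add: p_def x_def y_def add.commute)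
  have "p \<le> x" "p \<le> y" "0 < p" using min pos by (auto simp: p_def x_def y_def)
  have "x = p \<or> y = p"
  proof (rule ccontr)
    assume "\<not> ?thesis"
    then have "(p + 1) * (p + 1) \<le> x * y" using \<open>p \<le> x\<close> \<open>p \<le> y\<close> \<open>0 < p\<close> by (intro mult_mono) auto
    then show False using xy \<open>0 < p\<close> by (simp add: algebra_simps power2_eq_square)
  qed
  then have "p * (x + y - 2*p) = 1" using xy by (auto simp: algebra_simps power2_eq_square)
  then have "p = 1 \<and> (y = 1 \<or> y = 2)"
    using \<open>x = p \<or> y = p\<close> \<open>0 < p\<close> by (auto simp: pos_zmult_eq_1_iff)
  then have at_min: "g t0^2 + g (t0 + 1)^2 + 1 = 3 * g t0 * g (t0 + 1)"
    by (auto simp: p_def y_def)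
  show ?thesis
  proof (induction t rule: int_induct[where k = t0])
    case base
    show ?case by (rule at_min)
  next
    case (step1 s)
    then show ?case using markov_vieta_step[OF pos step1(2) frieze[of s]] by (simp add: add.assoc)
  next
    case (step2 s)
    have "g s^2 + g (s - 1)^2 + 1 = 3 * g s * g (s - 1)"
      using markov_vieta_step[of "g (s + 1)" "g s" "g (s - 1)"] step2(2) frieze[of "s - 1"] pos[of "s + 1"]
      by (simp add: algebra_simps)
    then show ?case by (simp add: algebra_simps)
  qed
qed

text \<open>The variables are the values at the corners i, i+e_k, ..., i+e_k+e_l+e_m of a unit cube
(q at the far corner); the hypotheses are the tiling relations on five of its faces.\<close>

lemma cube_identity:
  fixes p pk pl pm pkl pkm plm q ekl ekm elm :: "'a::comm_ring_1"
  assumes kl: "pl*pk - p*pkl = ekl" and km: "pm*pk - p*pkm = ekm" and lm: "pm*pl - p*plm = elm"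
    and lm': "pkm*pkl - pk*q = elm" and km': "plm*pkl - pl*q = ekm"
  shows "elm*pl*(pk^2 - p^2) - ekm*pk*(pl^2 - p^2) + ekl*(ekm*pl - elm*pk) = 0"
proof -
  have A: "(pl*pk - ekl)*(pm*pk - ekm) - elm*p^2 = p^2*pk*q"
    unfolding kl[symmetric] km[symmetric] lm'[symmetric] by (simp add: algebra_simps power2_eq_square)
  have B: "(pl*pk - ekl)*(pm*pl - elm) - ekm*p^2 = p^2*pl*q"
    unfolding kl[symmetric] lm[symmetric] km'[symmetric] by (simp add: algebra_simps power2_eq_square)
  have "pl * (p^2*pk*q) = pk * (p^2*pl*q)" by (simp add: algebra_simps)
  then have "pl * ((pl*pk - ekl)*(pm*pk - ekm) - elm*p^2) = pk * ((pl*pk - ekl)*(pm*pl - elm) - ekm*p^2)"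
    unfolding A B .
  then show ?thesis by (simp add: algebra_simps power2_eq_square)
qed

locale SL2_tiled =
  fixes eps :: "'n::finite \<Rightarrow> 'n \<Rightarrow> int" and a :: "int ^ 'n \<Rightarrow> int"
  assumes signature: "signature_matrix eps" and tiling: "SL2_tiling eps a"
begin

lemma pos: "0 < a i"
  using tiling by (simp add: SL2_tiling_def)

lemma square_relation: "k \<noteq> l \<Longrightarrow>
    a (i + unit_vec l) * a (i + unit_vec k) - a i * a (i + unit_vec k + unit_vec l) = eps k l"
  using tiling by (simp add: SL2_tiling_def)

lemma eps_offdiag: "k \<noteq> l \<Longrightarrow> eps k l = 1 \<or> eps k l = -1"
  using signature by (auto simp: signature_matrix_def)

lemma three_directions:
  assumes "k \<noteq> l" "k \<noteq> m" "l \<noteq> m"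
  shows "eps l m * a (i + unit_vec l) * (a (i + unit_vec k)^2 - a i^2)
       - eps k m * a (i + unit_vec k) * (a (i + unit_vec l)^2 - a i^2)
       + eps k l * (eps k m * a (i + unit_vec l) - eps l m * a (i + unit_vec k)) = 0"
proof (rule cube_identity)
  show "a (i + unit_vec l) * a (i + unit_vec k) - a i * a (i + unit_vec k + unit_vec l) = eps k l"
       "a (i + unit_vec m) * a (i + unit_vec k) - a i * a (i + unit_vec k + unit_vec m) = eps k m"
       "a (i + unit_vec m) * a (i + unit_vec l) - a i * a (i + unit_vec l + unit_vec m) = eps l m"
       "a (i + unit_vec k + unit_vec m) * a (i + unit_vec k + unit_vec l)
          - a (i + unit_vec k) * a (i + unit_vec k + unit_vec l + unit_vec m) = eps l m"
    using square_relation[OF assms(1)] square_relation[OF assms(2)] square_relation[OF assms(3)]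
      square_relation[OF assms(3), of "i + unit_vec k"]
    by (simp_all add: add.assoc)
  show "a (i + unit_vec l + unit_vec m) * a (i + unit_vec k + unit_vec l)
          - a (i + unit_vec l) * a (i + unit_vec k + unit_vec l + unit_vec m) = eps k m"
    using square_relation[OF assms(2), of "i + unit_vec l"] by (simp add: ac_simps)
qed

lemma equal_neighbours_if_same_sign:
  assumes "k \<noteq> l" "k \<noteq> m" "l \<noteq> m" and "eps k m = eps l m"
  shows "a (i + unit_vec k) = a (i + unit_vec l)"
proof -
  let ?p = "a i" and ?x = "a (i + unit_vec k)" and ?y = "a (i + unit_vec l)"
  have "eps l m * ((?x - ?y) * (?x * ?y + ?p^2 - eps k l)) = 0"
    using three_directions[OF assms(1-3), of i] assms(4) by (simp add: algebra_simps power2_eq_square)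
  moreover have "eps l m \<noteq> 0" using eps_offdiag[OF assms(3)] by auto
  moreover have "0 < ?x * ?y + ?p^2 - eps k l"
    using pos[of i] pos[of "i + unit_vec k"] pos[of "i + unit_vec l"] eps_offdiag[OF assms(1)]
    by (smt (verit) mult_pos_pos zero_less_power2)
  ultimately show ?thesis by simp
qed

lemma neighbour_product_if_opposite_sign:
  assumes "k \<noteq> l" "k \<noteq> m" "l \<noteq> m" and "eps k m = - eps l m"
  shows "a (i + unit_vec k) * a (i + unit_vec l) = a i^2 + eps k l"
proof -
  let ?p = "a i" and ?x = "a (i + unit_vec k)" and ?y = "a (i + unit_vec l)"
  have "eps l m * ((?x + ?y) * (?x * ?y - ?p^2 - eps k l)) = 0"
    using three_directions[OF assms(1-3), of i] assms(4) by (simp add: algebra_simps power2_eq_square)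
  moreover have "eps l m \<noteq> 0" using eps_offdiag[OF assms(3)] by auto
  moreover have "0 < ?x + ?y" using pos[of "i + unit_vec k"] pos[of "i + unit_vec l"] by simp
  ultimately show ?thesis by simp
qed

lemma sign_rule:
  assumes "k \<noteq> l" "k \<noteq> m" "l \<noteq> m"
  shows "eps k m = eps l m \<longleftrightarrow> eps k l = -1"
proof -
  obtain j where min: "\<forall>x. a j \<le> a x" using ex_min_nonneg_int[of a] pos by (meson less_imp_le)
  have prod_ge: "a j * a j \<le> a x * a y" for x y
    using min pos[of j] pos[of x] by (intro mult_mono) (auto simp: less_imp_le)
  show ?thesis
  proof
    assume same: "eps k m = eps l m"
    define i where "i = j - unit_vec k"
    have "a (i + unit_vec l) * a (i + unit_vec k) - a i * a (i + unit_vec k + unit_vec l) = eps k l"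
      by (rule square_relation[OF assms(1)])
    then have "a j * a j - a i * a (j + unit_vec l) = eps k l"
      using equal_neighbours_if_same_sign[OF assms same, of i] by (simp add: i_def)
    then show "eps k l = -1" using prod_ge[of i "j + unit_vec l"] eps_offdiag[OF assms(1)] by auto
  next
    assume kl: "eps k l = -1"
    show "eps k m = eps l m"
    proof (rule ccontr)
      assume "eps k m \<noteq> eps l m"
      then have "eps k m = - eps l m" using eps_offdiag[OF assms(2)] eps_offdiag[OF assms(3)] by auto
      then have "a (j + unit_vec k) * a (j + unit_vec l) = a j * a j - 1"
        using neighbour_product_if_opposite_sign[OF assms, of j] kl by (simp add: power2_eq_square)
      then show False using prod_ge[of "j + unit_vec k" "j + unit_vec l"] by simp
    qed
  qed
qed

context
  assumes three: "CARD('n) \<ge> 3"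
begin

lemma equal_neighbours:
  assumes "k \<noteq> l" and "eps k l = -1"
  shows "a (i + unit_vec k) = a (i + unit_vec l)"
proof -
  obtain m where "m \<noteq> k" "m \<noteq> l" using exists_third_element[OF three] by blast
  with assms show ?thesis using sign_rule[of k l m] equal_neighbours_if_same_sign by metis
qed

lemma neighbour_product:
  assumes "k \<noteq> l" and "eps k l = 1"
  shows "a (i + unit_vec k) * a (i + unit_vec l) = a i^2 + 1"
proof -
  obtain m where m: "m \<noteq> k" "m \<noteq> l" using exists_third_element[OF three] by blast
  then have "eps k m = - eps l m"
    using assms sign_rule[of k l m] eps_offdiag[of k m] eps_offdiag[of l m] by auto
  then show ?thesis using neighbour_product_if_opposite_sign[of k l m] assms m by auto
qed

lemma diagonal_frieze: "a (i + unit_vec k)^2 - a i * a (i + unit_vec k + unit_vec k) = -1"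
proof -
  obtain l where "l \<noteq> k" using exists_third_element[OF three] by blast
  then have kl: "k \<noteq> l" by simp
  consider "eps k l = -1" | "eps k l = 1" using eps_offdiag[OF kl] by auto
  then show ?thesis
  proof cases
    case 1
    then show ?thesis
      using square_relation[OF kl, of i] equal_neighbours[OF kl 1, of i]
        equal_neighbours[OF kl 1, of "i + unit_vec k"]
      by (simp add: power2_eq_square)
  next
    case 2
    have "a (i + unit_vec l) * a (i + unit_vec k) = a i * a i + 1"
      using neighbour_product[OF kl 2, of i] by (simp add: mult.commute power2_eq_square)
    then have "a i * a (i + unit_vec k + unit_vec l) = a i * a i"
      using square_relation[OF kl, of i] 2 by linarith
    then have "a (i + unit_vec k + unit_vec l) = a i" using pos[of i] by (metis mult_cancel_left less_irrefl)
    then show ?thesis using neighbour_product[OF kl 2, of "i + unit_vec k"] by (simp add: mult.commute)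
  qed
qed

end

end

theorem mainTheorem8:
  fixes eps :: "'n::finite \<Rightarrow> 'n \<Rightarrow> int" and a :: "int ^ 'n \<Rightarrow> int"
  assumes "CARD('n) \<ge> 3"
    and "signature_matrix eps"
    and "SL2_tiling eps a"
  shows "(\<forall>i. \<exists>m::nat. m \<ge> 1 \<and> a i = int (fib (2 * m - 1))) \<and>
         (\<forall>i k. a (i + unit_vec k) ^ 2 - a i * a (i + unit_vec k + unit_vec k) = -1 \<and> eps k k = -1)"
proof -
  interpret SL2_tiled eps a using assms(2,3) by unfold_locales
  note frieze = diagonal_frieze[OF assms(1)]
  have "\<exists>m\<ge>1. a i = int (fib (2 * m - 1))" for i
  proof -
    fix k :: 'n
    define g where "g t = a (i + t *s unit_vec k)" for t
    have "(t + 1) *s unit_vec k = t *s unit_vec k + unit_vec k"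
      and "(t + 2) *s unit_vec k = t *s unit_vec k + unit_vec k + unit_vec k" for t :: int
      by (simp_all add: vec_eq_iff algebra_simps)
    then have "g t * g (t + 2) = g (t + 1)^2 + 1" for t
      using frieze[of "i + t *s unit_vec k" k] by (simp add: g_def add.assoc)
    then have "g 0^2 + g 1^2 + 1 = 3 * g 0 * g 1"
      using positive_frieze_markov[of g 0] pos by (simp add: g_def)
    then have "a i^2 + a (i + unit_vec k)^2 + 1 = 3 * a i * a (i + unit_vec k)"
      by (simp add: g_def)
    then show ?thesis by (rule markov_solution_odd_fib[OF pos pos])
  qed
  then show ?thesis using frieze assms(2) by (auto simp: signature_matrix_def)
qed

end
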